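(* Let $G$ be an uncountable Polish group satisfying condition (C). If $A$ is an analytic subset of $G$ such that $A^{-1}A$ is meager, then the set \[ T(A)=\{\mu\in P(G): \mu(g_1Ag_2)=0 \text{ for all } g_1,g_2\in G\} \] is co-meager in $P(G)$.
   Context: A Polish group $G$ satisfies condition (C) if for every analytic and meager subset $A$ of $G$, its conjugate saturation $[A]=\{x\in G: \exists g\in G\ \exists a\in A \text{ with } x=gag^{-1}\}$ is meager in $G$. $P(G)$ denotes the space of Borel probability measures on $G$ with the weak* topology. A subset of a Polish space is analytic if it is a continuous image of $\mathbb{N}^{\mathbb{N}}$. $A^{-1}A=\{a^{-1}b: a,b\in A\}$. *)

theory Defs
  imports "HOL-Analysis.Analysis" "HOL-Probability.Probability"
begin

definition polish_group :: "('a::polish_space \<Rightarrow> 'a \<Rightarrow> 'a) \<Rightarrow> 'a \<Rightarrow> ('a \<Rightarrow> 'a) \<Rightarrow> bool" where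
  "polish_group m e iv \<longleftrightarrow> group m e iv
     \<and> continuous_on UNIV (\<lambda>p. m (fst p) (snd p)) \<and> continuous_on UNIV iv"

definition nowhere_dense_in :: "'a topology \<Rightarrow> 'a set \<Rightarrow> bool" where
  "nowhere_dense_in X S \<longleftrightarrow> S \<subseteq> topspace X \<and> X interior_of (X closure_of S) = {}"

definition meager_in :: "'a topology \<Rightarrow> 'a set \<Rightarrow> bool" where
  "meager_in X S \<longleftrightarrow> S \<subseteq> topspace X \<and>
     (\<exists>F :: nat \<Rightarrow> 'a set. (\<forall>n. nowhere_dense_in X (F n)) \<and> S \<subseteq> (\<Union>n. F n))"

definition comeager_in :: "'a topology \<Rightarrow> 'a set \<Rightarrow> bool" where
  "comeager_in X S \<longleftrightarrow> S \<subseteq> topspace X \<and> meager_in X (topspace X - S)"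

definition analytic :: "'a::topological_space set \<Rightarrow> bool" where
  "analytic A \<longleftrightarrow> (\<exists>f :: (nat \<Rightarrow> nat) \<Rightarrow> 'a. continuous_on UNIV f \<and> range f = A)"

definition conj_saturation :: "('a \<Rightarrow> 'a \<Rightarrow> 'a) \<Rightarrow> ('a \<Rightarrow> 'a) \<Rightarrow> 'a set \<Rightarrow> 'a set" where
  "conj_saturation m iv A = {x. \<exists>g a. a \<in> A \<and> x = m (m g a) (iv g)}"

definition condition_C :: "('a::topological_space \<Rightarrow> 'a \<Rightarrow> 'a) \<Rightarrow> ('a \<Rightarrow> 'a) \<Rightarrow> bool" where
  "condition_C m iv \<longleftrightarrow> (\<forall>A. analytic A \<and> meager_in euclidean A
      \<longrightarrow> meager_in euclidean (conj_saturation m iv A))"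

definition prob_measures :: "'a::topological_space measure set" where
  "prob_measures = {M. sets M = sets borel \<and> prob_space M}"

definition weak_star_topology :: "'a::topological_space measure topology" where
  "weak_star_topology = topology_generated_by
     (insert prob_measures
       {{M \<in> prob_measures. integral\<^sup>L M f \<in> U} | f U.
          continuous_on UNIV f \<and> bounded (range (f :: 'a \<Rightarrow> real)) \<and> open U})"

text \<open>The set T(A); the measure of the (analytic, hence universally measurable) set
  g1 A g2 is taken in the completion of \<mu>.\<close>
definition T_set :: "('a::topological_space \<Rightarrow> 'a \<Rightarrow> 'a) \<Rightarrow> 'a set \<Rightarrow> 'a measure set" where
  "T_set m A = {\<mu> \<in> prob_measures. \<forall>g1 g2.
      measure (completion \<mu>) ((\<lambda>a. m (m g1 a) g2) ` A) = 0}"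

end

theory Submission
  imports Defs
begin

text \<open>
  By condition (C) the conjugate saturation \<open>N\<close> of the analytic meager set \<open>A\<inverse>A\<close> is meager, so it
  is covered by an increasing sequence of closed nowhere dense sets \<open>F\<^sub>n\<close>, all containing \<open>e\<close>.
  If \<open>\<mu> \<notin> T(A)\<close>, some translate \<open>g\<^sub>1Ag\<^sub>2\<close> contains a compact set \<open>K\<close> of positive measure; all
  left quotients \<open>x\<inverse>y\<close> of points of \<open>K\<close> lie in \<open>N\<close>, so for large \<open>n\<close> the pairs \<open>(x, y) \<in> K \<times> K\<close>
  with \<open>x\<inverse>y \<in> F\<^sub>n\<close> carry more than half of \<open>(\<mu> \<otimes> \<mu>)(K \<times> K)\<close>: \<open>\<mu>\<close> is heavy for \<open>F\<^sub>n\<close>. Hence the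
  complement of \<open>T(A)\<close> is covered by countably many sets of heavy measures.

  Such a set is nowhere dense in the weak* topology: near any measure there is a finitely supported
  measure with small weights on atoms \<open>z\<^sub>i\<close> in general position (\<open>z\<^sub>i\<inverse>z\<^sub>j \<notin> F\<close>, possible because the
  translates of \<open>F\<close> are nowhere dense), and every measure weak* close to it puts almost all of its
  mass on small balls around the \<open>z\<^sub>i\<close>, which the relation \<open>x\<inverse>y \<in> F\<close> never links, so it cannot be
  heavy.
\<close>

section \<open>The weak* topology\<close>

lemma topspace_weak_star_topology [simp]: "topspace weak_star_topology = prob_measures"
  unfolding weak_star_topology_def by auto

lemma openin_weak_star_integral:
  assumes "continuous_on UNIV f" "bounded (range (f :: 'a::topological_space \<Rightarrow> real))" "open S"
  shows "openin weak_star_topology {M \<in> prob_measures. integral\<^sup>L M f \<in> S}"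
  unfolding weak_star_topology_def openin_topology_generated_by_iff
  by (rule generate_topology_on.Basis) (use assms in blast)

definition weak_nbhd :: "'a::topological_space measure \<Rightarrow> ('a \<Rightarrow> real) list \<Rightarrow> real \<Rightarrow> 'a measure set"
  where "weak_nbhd \<mu> fs \<epsilon> = {\<nu> \<in> prob_measures. \<forall>f\<in>set fs. \<bar>integral\<^sup>L \<nu> f - integral\<^sup>L \<mu> f\<bar> < \<epsilon>}"

lemma openin_weak_nbhd:
  assumes "\<forall>f\<in>set fs. continuous_on UNIV f \<and> bounded (range f)"
  shows "openin weak_star_topology (weak_nbhd \<mu> fs \<epsilon>)"
  using assms
proof (induction fs)
  case Nil
  have "weak_nbhd \<mu> [] \<epsilon> = topspace weak_star_topology"
    by (simp add: weak_nbhd_def)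
  then show ?case
    by (metis openin_topspace)
next
  case (Cons f fs)
  have "weak_nbhd \<mu> (f # fs) \<epsilon>
      = {\<nu> \<in> prob_measures. integral\<^sup>L \<nu> f \<in> ball (integral\<^sup>L \<mu> f) \<epsilon>} \<inter> weak_nbhd \<mu> fs \<epsilon>"
    unfolding weak_nbhd_def by (auto simp: dist_real_def abs_minus_commute)
  moreover have "openin weak_star_topology
      {\<nu> \<in> prob_measures. integral\<^sup>L \<nu> f \<in> ball (integral\<^sup>L \<mu> f) \<epsilon>}"
    using Cons.prems by (intro openin_weak_star_integral) auto
  ultimately show ?case
    using Cons by (simp add: openin_Int)
qed

lemma weak_nbhd_singleton_subset:
  assumes "open V" "integral\<^sup>L \<mu> f \<in> V"
  obtains \<epsilon> where "\<epsilon> > 0" "weak_nbhd \<mu> [f] \<epsilon> \<subseteq> {M \<in> prob_measures. integral\<^sup>L M f \<in> V}"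
proof -
  obtain \<epsilon> where "\<epsilon> > 0" and \<epsilon>: "ball (integral\<^sup>L \<mu> f) \<epsilon> \<subseteq> V"
    using assms by (rule openE)
  have "weak_nbhd \<mu> [f] \<epsilon> \<subseteq> {M \<in> prob_measures. integral\<^sup>L M f \<in> V}"
    using \<epsilon> by (auto simp: weak_nbhd_def dist_real_def abs_minus_commute)
  with \<open>\<epsilon> > 0\<close> show ?thesis
    by (rule that)
qed

lemma weak_nbhd_subset_openin:
  assumes "openin weak_star_topology U" "\<mu> \<in> U"
  obtains fs \<epsilon> where "\<forall>f\<in>set fs. continuous_on UNIV f \<and> bounded (range f)"
    "\<epsilon> > 0" "weak_nbhd \<mu> fs \<epsilon> \<subseteq> U"
proof -
  let ?tests = "\<lambda>fs. \<forall>f\<in>set fs. continuous_on UNIV f \<and> bounded (range (f :: 'a \<Rightarrow> real))"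
  have "generate_topology_on (insert prob_measures
       {{M \<in> prob_measures. integral\<^sup>L M f \<in> U} | f U.
          continuous_on UNIV f \<and> bounded (range (f :: 'a \<Rightarrow> real)) \<and> open U}) U"
    using assms(1) unfolding weak_star_topology_def openin_topology_generated_by_iff .
  then have "\<exists>fs \<epsilon>. ?tests fs \<and> \<epsilon> > 0 \<and> weak_nbhd \<mu> fs \<epsilon> \<subseteq> U"
    using assms(2)
  proof (induction arbitrary: \<mu>)
    case Empty
    then show ?case by simp
  next
    case (Int U1 U2)
    obtain fs1 \<epsilon>1 where "?tests fs1" "\<epsilon>1 > 0" "weak_nbhd \<mu> fs1 \<epsilon>1 \<subseteq> U1"
      using Int.IH(1) Int.prems by blast
    moreover obtain fs2 \<epsilon>2 where "?tests fs2" "\<epsilon>2 > 0" "weak_nbhd \<mu> fs2 \<epsilon>2 \<subseteq> U2"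
      using Int.IH(2) Int.prems by blast
    moreover have "weak_nbhd \<mu> (fs1 @ fs2) (min \<epsilon>1 \<epsilon>2) \<subseteq> weak_nbhd \<mu> fs1 \<epsilon>1 \<inter> weak_nbhd \<mu> fs2 \<epsilon>2"
      unfolding weak_nbhd_def by auto
    moreover have "?tests (fs1 @ fs2)"
      using \<open>?tests fs1\<close> \<open>?tests fs2\<close> by auto
    ultimately have "?tests (fs1 @ fs2) \<and> min \<epsilon>1 \<epsilon>2 > 0 \<and> weak_nbhd \<mu> (fs1 @ fs2) (min \<epsilon>1 \<epsilon>2) \<subseteq> U1 \<inter> U2"
      by auto
    then show ?case
      by blast
  next
    case (UN K)
    then obtain k where "k \<in> K" "\<mu> \<in> k"
      by blast
    with UN.IH show ?case
      by blast
  next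
    case (Basis S)
    from Basis.hyps show ?case
    proof (elim insertE CollectE exE conjE)
      assume "S = prob_measures"
      then have "weak_nbhd \<mu> [] 1 \<subseteq> S"
        by (simp add: weak_nbhd_def)
      then show ?case
        by (intro exI[of _ "[]"] exI[of _ "1::real"]) simp
    next
      fix f :: "'a \<Rightarrow> real" and V
      assume S: "S = {M \<in> prob_measures. integral\<^sup>L M f \<in> V}"
        and f: "continuous_on UNIV f" "bounded (range f)" and "open V"
      have "integral\<^sup>L \<mu> f \<in> V"
        using Basis.prems S by simp
      with \<open>open V\<close> obtain \<epsilon> where "\<epsilon> > 0" "weak_nbhd \<mu> [f] \<epsilon> \<subseteq> S"
        unfolding S by (rule weak_nbhd_singleton_subset)
      with f \<open>\<epsilon> > 0\<close> show ?case
        by (intro exI[of _ "[f]"] exI[of _ \<epsilon>]) auto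
    qed
  qed
  then show ?thesis
    using that by blast
qed

lemma nowhere_dense_inI:
  assumes "E \<subseteq> topspace X"
    and "\<And>U. openin X U \<Longrightarrow> U \<noteq> {} \<Longrightarrow> \<exists>V. openin X V \<and> V \<noteq> {} \<and> V \<subseteq> U \<and> V \<inter> E = {}"
  shows "nowhere_dense_in X E"
  unfolding nowhere_dense_in_def
proof (intro conjI assms(1))
  let ?U = "X interior_of (X closure_of E)"
  show "?U = {}"
  proof (rule ccontr)
    assume "?U \<noteq> {}"
    then obtain V where V: "openin X V" "V \<noteq> {}" "V \<subseteq> ?U" "V \<inter> E = {}"
      using assms(2)[OF openin_interior_of] by blast
    have "V \<subseteq> X closure_of E"
      using V(3) interior_of_subset by (rule order_trans)
    then have "V \<inter> X closure_of E \<noteq> {}"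
      using V(2) by blast
    with V(1,4) show False
      by (simp add: openin_Int_closure_of_eq_empty)
  qed
qed

section \<open>Approximation by finitely supported measures\<close>

lemma prob_measuresD:
  assumes "\<mu> \<in> prob_measures"
  shows "sets \<mu> = sets borel" "space \<mu> = UNIV" "prob_space \<mu>"
  using assms unfolding prob_measures_def by (auto dest: sets_eq_imp_space_eq)

lemma borel_measurable_prob_measure:
  assumes "\<mu> \<in> prob_measures" "f \<in> borel_measurable borel"
  shows "f \<in> borel_measurable \<mu>"
  using assms(2) by (simp add: measurable_cong_sets[OF prob_measuresD(1)[OF assms(1)] refl])

lemma integrable_bounded_continuous:
  fixes f :: "'a::topological_space \<Rightarrow> real"
  assumes "\<mu> \<in> prob_measures" "continuous_on UNIV f" "bounded (range f)"
  shows "integrable \<mu> f"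
proof -
  interpret prob_space \<mu>
    using prob_measuresD(3)[OF assms(1)] .
  obtain B where B: "\<forall>y\<in>range f. \<bar>y\<bar> \<le> B"
    using assms(3) unfolding bounded_real by blast
  show ?thesis
  proof (rule integrable_const_bound)
    show "AE x in \<mu>. norm (f x) \<le> B"
      using B by simp
    show "f \<in> borel_measurable \<mu>"
      using assms(1) borel_measurable_continuous_onI[OF assms(2)]
      by (rule borel_measurable_prob_measure)
  qed
qed

text \<open>The measure \<open>\<Sum>\<^sub>i\<^sub>\<in>\<^sub>I v i \<cdot> \<delta>\<^bsub>z i\<^esub>\<close>; only meaningful when \<open>v\<close> is a probability vector on \<open>I\<close>,
  otherwise \<open>embed_pmf\<close> returns a junk distribution.\<close>

definition point_mixture :: "'i set \<Rightarrow> ('i \<Rightarrow> real) \<Rightarrow> ('i \<Rightarrow> 'a::topological_space) \<Rightarrow> 'a measure"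
  where "point_mixture I v z = distr (measure_pmf (embed_pmf (\<lambda>i. if i \<in> I then v i else 0))) borel z"

lemma point_mixture_in_prob_measures: "point_mixture I v z \<in> prob_measures"
  unfolding point_mixture_def prob_measures_def by (auto intro!: measure_pmf.prob_space_distr)

lemma integral_point_mixture:
  fixes f :: "'a::topological_space \<Rightarrow> real"
  assumes I: "finite I" and v: "\<And>i. i \<in> I \<Longrightarrow> v i \<ge> 0" "(\<Sum>i\<in>I. v i) = 1"
    and f: "f \<in> borel_measurable borel"
  shows "integral\<^sup>L (point_mixture I v z) f = (\<Sum>i\<in>I. v i * f (z i))"
proof -
  define q where "q i = (if i \<in> I then v i else 0)" for i
  have "(\<integral>\<^sup>+i. ennreal (q i) \<partial>count_space UNIV) = (\<Sum>i\<in>I. ennreal (q i))"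
    using I by (intro nn_integral_count_space') (auto simp: q_def)
  also have "\<dots> = 1"
    using v by (simp add: q_def)
  finally have pmf_q: "pmf (embed_pmf q) i = q i" for i
    using v(1) by (intro pmf_embed_pmf) (auto simp: q_def)
  have "integral\<^sup>L (point_mixture I v z) f = (LINT i|measure_pmf (embed_pmf q). f (z i))"
    unfolding point_mixture_def q_def[symmetric] using f by (subst integral_distr) auto
  also have "\<dots> = (\<Sum>i\<in>I. pmf (embed_pmf q) i *\<^sub>R f (z i))"
    using I by (rule integral_measure_pmf) (auto simp: set_pmf_eq pmf_q q_def split: if_splits)
  also have "\<dots> = (\<Sum>i\<in>I. v i * f (z i))"
    by (simp add: pmf_q q_def)
  finally show ?thesis .
qed

lemma finite_range_floor_divide:
  fixes f :: "'a \<Rightarrow> real"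
  assumes "bounded (range f)"
  shows "finite (range (\<lambda>x. \<lfloor>f x / \<eta>\<rfloor>))"
proof -
  obtain B where B: "\<forall>y\<in>range f. \<bar>y\<bar> \<le> B"
    using assms unfolding bounded_real by blast
  have fB: "\<bar>f x / \<eta>\<bar> \<le> B / \<bar>\<eta>\<bar>" for x
    using B by (simp add: abs_divide divide_right_mono)
  have "f x / \<eta> \<le> B / \<bar>\<eta>\<bar>" "- (B / \<bar>\<eta>\<bar>) \<le> f x / \<eta>" for x
    using abs_le_D1[OF fB[of x]] abs_le_D2[OF fB[of x]] by linarith+
  then have "range (\<lambda>x. \<lfloor>f x / \<eta>\<rfloor>) \<subseteq> {\<lfloor>- (B / \<bar>\<eta>\<bar>)\<rfloor>..\<lfloor>B / \<bar>\<eta>\<bar>\<rfloor>}"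
    by (auto intro!: floor_mono)
  then show ?thesis
    by (rule finite_subset) simp
qed

lemma abs_diff_less_if_floor_divide_eq:
  fixes a b \<eta> :: real
  assumes "\<eta> > 0" "\<lfloor>a / \<eta>\<rfloor> = \<lfloor>b / \<eta>\<rfloor>"
  shows "\<bar>a - b\<bar> < \<eta>"
proof -
  have "\<bar>a / \<eta> - b / \<eta>\<bar> < 1"
    using assms(2) of_int_floor_le[of "a / \<eta>"] of_int_floor_le[of "b / \<eta>"]
      real_of_int_floor_add_one_gt[of "a / \<eta>"] real_of_int_floor_add_one_gt[of "b / \<eta>"]
    by linarith
  then have "\<bar>a - b\<bar> / \<eta> < 1"
    using assms(1) by (simp add: diff_divide_distrib[symmetric])
  then show ?thesis
    using assms(1) by (simp add: pos_divide_less_eq)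
qed

lemma measurable_map_list_count_space:
  fixes g :: "'b \<Rightarrow> 'a \<Rightarrow> 'c::countable"
  assumes "\<And>f. f \<in> set fs \<Longrightarrow> g f \<in> measurable M (count_space UNIV)"
  shows "(\<lambda>x. map (\<lambda>f. g f x) fs) \<in> measurable M (count_space UNIV)"
  using assms
proof (induction fs)
  case Nil
  then show ?case by simp
next
  case (Cons f fs)
  then have "(\<lambda>x. (g f x, map (\<lambda>f. g f x) fs)) \<in> measurable M (count_space UNIV \<Otimes>\<^sub>M count_space UNIV)"
    by (intro measurable_Pair) auto
  then have "(\<lambda>x. (g f x, map (\<lambda>f. g f x) fs)) \<in> measurable M (count_space UNIV)"
    by (simp add: pair_measure_countable)
  from measurable_compose[OF this, of "\<lambda>p. fst p # snd p" "count_space UNIV"]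
  show ?case
    by simp
qed

lemma (in prob_space) abs_integral_indicator_diff_le:
  fixes f :: "'a \<Rightarrow> real"
  assumes A: "A \<in> events" and f: "integrable M f" "\<And>x. x \<in> A \<Longrightarrow> \<bar>f x - c\<bar> \<le> \<eta>"
  shows "\<bar>prob A * c - expectation (\<lambda>x. f x * indicator A x)\<bar> \<le> \<eta> * prob A"
proof -
  have ind: "integrable M (indicator A :: 'a \<Rightarrow> real)"
    using A by (simp add: emeasure_eq_measure)
  have fA: "integrable M (\<lambda>x. f x * indicator A x)"
    using A f(1) by (rule integrable_real_mult_indicator)
  have "expectation (\<lambda>x. (c - f x) * indicator A x)
      = expectation (\<lambda>x. c * indicator A x) - expectation (\<lambda>x. f x * indicator A x)"
    unfolding left_diff_distrib using ind fA by (intro Bochner_Integration.integral_diff) auto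
  then have "prob A * c - expectation (\<lambda>x. f x * indicator A x) = expectation (\<lambda>x. (c - f x) * indicator A x)"
    using A by (simp add: mult.commute)
  also have "\<bar>\<dots>\<bar> \<le> expectation (\<lambda>x. \<bar>(c - f x) * indicator A x\<bar>)"
    by (rule integral_abs_bound)
  also have "\<dots> \<le> expectation (\<lambda>x. \<eta> * indicator A x)"
  proof (rule integral_mono)
    show "integrable M (\<lambda>x. \<bar>(c - f x) * indicator A x\<bar>)"
      using ind fA by (intro integrable_abs) (simp add: left_diff_distrib)
    show "\<bar>(c - f x) * indicator A x\<bar> \<le> \<eta> * indicator A x" for x
      using f(2)[of x] by (auto simp: indicator_def abs_minus_commute)
  qed (use ind in simp)
  also have "\<dots> = \<eta> * prob A"
    using A by simp
  finally show ?thesis .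
qed

lemma (in prob_space) integral_approx_by_partition:
  fixes f :: "'a \<Rightarrow> real"
  assumes C: "finite C" and P: "\<And>c. c \<in> C \<Longrightarrow> P c \<in> events" "disjoint_family_on P C"
    and cover: "space M \<subseteq> (\<Union>c\<in>C. P c)"
    and f: "integrable M f" "\<And>c x. c \<in> C \<Longrightarrow> x \<in> P c \<Longrightarrow> \<bar>f x - f (y c)\<bar> \<le> \<eta>"
  shows "\<bar>(\<Sum>c\<in>C. prob (P c) * f (y c)) - expectation f\<bar> \<le> \<eta>"
proof -
  have "expectation f = expectation (\<lambda>x. \<Sum>c\<in>C. f x * indicator (P c) x)"
  proof (rule Bochner_Integration.integral_cong)
    fix x assume "x \<in> space M"
    with cover obtain c where "c \<in> C" "x \<in> P c"
      by blast
    from sum_indicator_disjoint_family[OF P(2) this(2) C this(1), of "\<lambda>_. f x"]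
    show "f x = (\<Sum>c\<in>C. f x * indicator (P c) x)"
      by simp
  qed simp
  also have "\<dots> = (\<Sum>c\<in>C. expectation (\<lambda>x. f x * indicator (P c) x))"
    using P(1) f(1) by (intro Bochner_Integration.integral_sum integrable_real_mult_indicator)
  finally have "\<bar>(\<Sum>c\<in>C. prob (P c) * f (y c)) - expectation f\<bar>
      \<le> (\<Sum>c\<in>C. \<bar>prob (P c) * f (y c) - expectation (\<lambda>x. f x * indicator (P c) x)\<bar>)"
    by (simp only: sum_subtractf[symmetric] sum_abs)
  also have "\<dots> \<le> (\<Sum>c\<in>C. \<eta> * prob (P c))"
    using P(1) f by (intro sum_mono abs_integral_indicator_diff_le) auto
  also have "\<dots> = \<eta> * prob (\<Union>c\<in>C. P c)"
    using finite_measure_finite_Union[OF C _ P(2)] P(1) by (simp add: sum_distrib_left image_subset_iff)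
  also have "(\<Union>c\<in>C. P c) = space M"
    using cover P(1)[THEN sets.sets_into_space] by blast
  finally show ?thesis
    by (simp add: prob_space)
qed

lemma finite_range_map_floor_divide:
  fixes fs :: "('a \<Rightarrow> real) list" and \<eta> :: real
  assumes "\<forall>f\<in>set fs. bounded (range f)"
  shows "finite (range (\<lambda>x. map (\<lambda>f. \<lfloor>f x / \<eta>\<rfloor>) fs))"
proof (rule finite_subset)
  show "range (\<lambda>x. map (\<lambda>f. \<lfloor>f x / \<eta>\<rfloor>) fs)
      \<subseteq> {l. set l \<subseteq> (\<Union>f\<in>set fs. range (\<lambda>x. \<lfloor>f x / \<eta>\<rfloor>)) \<and> length l = length fs}"
    by fastforce
  show "finite \<dots>"
    using assms finite_range_floor_divide by (intro finite_lists_length_eq finite_UN_I) auto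
qed

lemma measurable_map_floor_divide:
  fixes fs :: "('a \<Rightarrow> real) list" and \<eta> :: real
  assumes "\<forall>f\<in>set fs. f \<in> borel_measurable M"
  shows "(\<lambda>x. map (\<lambda>f. \<lfloor>f x / \<eta>\<rfloor>) fs) \<in> measurable M (count_space UNIV)"
proof (rule measurable_map_list_count_space)
  fix f assume "f \<in> set fs"
  with assms have "(\<lambda>x. f x / \<eta>) \<in> borel_measurable M"
    by (intro borel_measurable_divide) auto
  then show "(\<lambda>x. \<lfloor>f x / \<eta>\<rfloor>) \<in> measurable M (count_space UNIV)"
    by (rule measurable_compose[OF _ measurable_real_floor])
qed

lemma finitely_supported_approx:
  fixes \<mu> :: "'a::topological_space measure" and fs :: "('a \<Rightarrow> real) list" and \<eta> :: real
  assumes \<mu>: "\<mu> \<in> prob_measures"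
    and fs: "\<forall>f\<in>set fs. continuous_on UNIV f \<and> bounded (range f)" and \<eta>: "\<eta> > 0"
  obtains C :: "'a set" and w where "finite C" "\<And>c. c \<in> C \<Longrightarrow> w c \<ge> 0" "(\<Sum>c\<in>C. w c) = 1"
    "\<And>f. f \<in> set fs \<Longrightarrow> \<bar>(\<Sum>c\<in>C. w c * f c) - integral\<^sup>L \<mu> f\<bar> \<le> \<eta>"
proof -
  interpret prob_space \<mu>
    using prob_measuresD(3)[OF \<mu>] .
  \<comment> \<open>Partition the space into the cells on which all \<open>f \<in> set fs\<close> have the same rounded value,
    each cell represented by one of its points.\<close>
  define cell where "cell x = map (\<lambda>f. \<lfloor>f x / \<eta>\<rfloor>) fs" for x
  define rep where "rep l = (SOME x. cell x = l)" for l
  define C where "C = rep ` range cell"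
  define P where "P c = cell -` {cell c}" for c
  have cell_rep: "cell (rep (cell x)) = cell x" for x
    unfolding rep_def by (rule someI[of _ x]) (rule refl)
  have C: "finite C"
    unfolding C_def cell_def using fs by (simp add: finite_range_map_floor_divide)
  have "cell \<in> measurable borel (count_space UNIV)"
    unfolding cell_def using fs borel_measurable_continuous_onI
    by (intro measurable_map_floor_divide) blast
  then have P_events: "P c \<in> events" for c
    using measurable_sets[of cell borel "count_space UNIV" "{cell c}"] prob_measuresD(1,2)[OF \<mu>]
    by (simp add: P_def)
  have P_disj: "disjoint_family_on P C"
    unfolding disjoint_family_on_def P_def C_def by (auto simp: cell_rep)
  have cover: "space \<mu> \<subseteq> (\<Union>c\<in>C. P c)"
    unfolding C_def P_def by (auto simp: cell_rep)
  have close: "\<bar>f x - f c\<bar> \<le> \<eta>" if "f \<in> set fs" "x \<in> P c" for f c x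
  proof -
    have "\<lfloor>f x / \<eta>\<rfloor> = \<lfloor>f c / \<eta>\<rfloor>"
      using that by (auto simp: P_def cell_def)
    then show ?thesis
      using abs_diff_less_if_floor_divide_eq[OF \<eta>] by (simp add: less_imp_le)
  qed
  show ?thesis
  proof (rule that[of C "\<lambda>c. prob (P c)"])
    show "finite C"
      by (rule C)
    show "prob (P c) \<ge> 0" for c
      by simp
    have "(\<Sum>c\<in>C. prob (P c)) = prob (\<Union>c\<in>C. P c)"
      using finite_measure_finite_Union[OF C _ P_disj] P_events by (simp add: image_subset_iff)
    also have "(\<Union>c\<in>C. P c) = space \<mu>"
      using cover P_events[THEN sets.sets_into_space] by blast
    finally show "(\<Sum>c\<in>C. prob (P c)) = 1"
      by (simp add: prob_space)
    fix f assume "f \<in> set fs"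
    then show "\<bar>(\<Sum>c\<in>C. prob (P c) * f c) - integral\<^sup>L \<mu> f\<bar> \<le> \<eta>"
      using integral_approx_by_partition[OF C P_events P_disj cover, of f id \<eta>]
        integrable_bounded_continuous[OF \<mu>] fs close by simp
  qed
qed

section \<open>Points in general position in a Polish group\<close>

definition closed_nowhere_dense :: "'a::topological_space set \<Rightarrow> bool"
  where "closed_nowhere_dense F \<longleftrightarrow> closed F \<and> interior F = {}"

lemma closed_nowhere_dense_Un:
  "closed_nowhere_dense F \<Longrightarrow> closed_nowhere_dense G \<Longrightarrow> closed_nowhere_dense (F \<union> G)"
  unfolding closed_nowhere_dense_def by (metis closed_Un interior_closed_Un_empty_interior)

lemma closed_nowhere_dense_UN:
  "finite I \<Longrightarrow> (\<And>i. i \<in> I \<Longrightarrow> closed_nowhere_dense (F i)) \<Longrightarrow> closed_nowhere_dense (\<Union>i\<in>I. F i)"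
  by (induction I rule: finite_induct)
    (simp_all add: closed_nowhere_dense_Un closed_nowhere_dense_def[of "{}"])

lemma closed_nowhere_dense_homeomorphic_image:
  assumes h: "homeomorphic_map euclidean euclidean h" and F: "closed_nowhere_dense F"
  shows "closed_nowhere_dense (h ` F)"
proof -
  have "closed (h ` F)"
    using F homeomorphic_map_closedness[OF h, of F] by (simp add: closed_nowhere_dense_def)
  moreover have "interior (h ` F) = h ` interior F"
    using homeomorphic_map_interior_of[OF h, of F] by simp
  ultimately show ?thesis
    using F by (simp add: closed_nowhere_dense_def)
qed

lemma open_not_subset_closed_nowhere_dense:
  assumes "open U" "U \<noteq> {}" "closed_nowhere_dense F"
  obtains x where "x \<in> U" "x \<notin> F"
proof -
  have "\<not> U \<subseteq> F"
    using assms interior_maximal[of U F] by (auto simp: closed_nowhere_dense_def)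
  with that show ?thesis
    by blast
qed

locale polish_grp =
  fixes m :: "'a::polish_space \<Rightarrow> 'a \<Rightarrow> 'a" and e :: 'a and iv :: "'a \<Rightarrow> 'a"
  assumes polish_group: "polish_group m e iv"
begin

sublocale group m e iv
  using polish_group unfolding polish_group_def by blast

lemma continuous_on_m:
  assumes "continuous_on UNIV f" "continuous_on UNIV g"
  shows "continuous_on UNIV (\<lambda>x. m (f x) (g x))"
proof -
  have "continuous_on UNIV (\<lambda>p. m (fst p) (snd p))"
    using polish_group unfolding polish_group_def by blast
  from continuous_on_compose2[OF this continuous_on_Pair[OF assms]] show ?thesis
    by simp
qed

lemma continuous_on_iv:
  assumes "continuous_on UNIV f"
  shows "continuous_on UNIV (\<lambda>x. iv (f x))"
proof -
  have "continuous_on UNIV iv"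
    using polish_group unfolding polish_group_def by blast
  from continuous_on_compose2[OF this assms] show ?thesis
    by simp
qed

lemma iv_mult_cancel_left [simp]: "m (iv g) (m g x) = x"
  by (simp add: assoc[symmetric])

lemma mult_iv_cancel_left [simp]: "m g (m (iv g) x) = x"
  by (simp add: assoc[symmetric])

lemma homeomorphic_map_left_mult: "homeomorphic_map euclidean euclidean (m g)"
  unfolding homeomorphic_map_maps homeomorphic_maps_def
  by (intro exI[of _ "m (iv g)"]) (simp add: continuous_on_m continuous_on_id continuous_on_const)

lemma homeomorphic_map_iv: "homeomorphic_map euclidean euclidean iv"
  unfolding homeomorphic_map_maps homeomorphic_maps_def
  by (intro exI[of _ iv]) (simp add: continuous_on_iv continuous_on_id)

lemma point_avoiding_quotients:
  assumes "finite Y" "open U" "U \<noteq> {}" "closed_nowhere_dense F"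
  obtains x where "x \<in> U" "\<forall>y\<in>Y. m (iv y) x \<notin> F \<and> m (iv x) y \<notin> F"
proof -
  define S where "S = (\<Union>y\<in>Y. m y ` F \<union> m y ` iv ` F)"
  have "closed_nowhere_dense S"
    unfolding S_def using assms(1,4)
    by (intro closed_nowhere_dense_UN closed_nowhere_dense_Un
        closed_nowhere_dense_homeomorphic_image[OF homeomorphic_map_left_mult]
        closed_nowhere_dense_homeomorphic_image[OF homeomorphic_map_iv])
  with assms(2,3) obtain x where "x \<in> U" "x \<notin> S"
    by (rule open_not_subset_closed_nowhere_dense)
  have "m (iv y) x \<notin> F \<and> m (iv x) y \<notin> F" if "y \<in> Y" for y
  proof (intro conjI notI)
    assume "m (iv y) x \<in> F"
    then have "x \<in> m y ` F"
      by (rule image_eqI[rotated]) simp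
    with \<open>x \<notin> S\<close> \<open>y \<in> Y\<close> show False
      unfolding S_def by blast
  next
    assume "m (iv x) y \<in> F"
    then have "x \<in> m y ` iv ` F"
      by (intro image_eqI[where x = "iv (m (iv x) y)"] imageI) (simp_all add: inverse_distrib_swap)
    with \<open>x \<notin> S\<close> \<open>y \<in> Y\<close> show False
      unfolding S_def by blast
  qed
  with \<open>x \<in> U\<close> show ?thesis
    by (intro that) blast+
qed

lemma general_position:
  assumes "finite I" "\<And>i. i \<in> I \<Longrightarrow> open (U i) \<and> U i \<noteq> {}" "closed_nowhere_dense F"
  obtains z where "\<And>i. i \<in> I \<Longrightarrow> z i \<in> U i"
    "\<And>i j. i \<in> I \<Longrightarrow> j \<in> I \<Longrightarrow> i \<noteq> j \<Longrightarrow> m (iv (z i)) (z j) \<notin> F"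
proof -
  have "\<exists>z. (\<forall>i\<in>I. z i \<in> U i) \<and> (\<forall>i\<in>I. \<forall>j\<in>I. i \<noteq> j \<longrightarrow> m (iv (z i)) (z j) \<notin> F)"
    using assms(1,2)
  proof (induction I rule: finite_induct)
    case empty
    then show ?case by simp
  next
    case (insert a I)
    then obtain z where zU: "\<forall>i\<in>I. z i \<in> U i"
      and zF: "\<forall>i\<in>I. \<forall>j\<in>I. i \<noteq> j \<longrightarrow> m (iv (z i)) (z j) \<notin> F"
      by auto
    have "finite (z ` I)" "open (U a)" "U a \<noteq> {}"
      using insert by auto
    then obtain x where "x \<in> U a" and x: "\<forall>y\<in>z ` I. m (iv y) x \<notin> F \<and> m (iv x) y \<notin> F"
      using assms(3) by (rule point_avoiding_quotients)
    show ?case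
    proof (intro exI[of _ "z(a := x)"] conjI ballI impI)
      show "(z(a := x)) i \<in> U i" if "i \<in> insert a I" for i
        using that zU \<open>x \<in> U a\<close> by auto
      show "m (iv ((z(a := x)) i)) ((z(a := x)) j) \<notin> F"
        if "i \<in> insert a I" "j \<in> insert a I" "i \<noteq> j" for i j
        using that zF x insert(2) by auto
    qed
  qed
  then obtain z where z: "\<forall>i\<in>I. z i \<in> U i" "\<forall>i\<in>I. \<forall>j\<in>I. i \<noteq> j \<longrightarrow> m (iv (z i)) (z j) \<notin> F"
    by (elim exE conjE)
  show ?thesis
  proof (rule that[of z])
    show "z i \<in> U i" if "i \<in> I" for i
      using z(1) that by blast
    show "m (iv (z i)) (z j) \<notin> F" if "i \<in> I" "j \<in> I" "i \<noteq> j" for i j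
      using z(2) that by blast
  qed
qed

lemma separated_balls_disjoint:
  assumes "e \<in> F" and "\<And>x y. dist x a < r \<Longrightarrow> dist y b < r \<Longrightarrow> m (iv x) y \<notin> F"
  shows "ball a r \<inter> ball b r = {}"
proof (rule equals0I)
  fix x assume "x \<in> ball a r \<inter> ball b r"
  with assms(2)[of x x] have "m (iv x) x \<notin> F"
    by (simp add: dist_commute)
  with assms(1) show False
    by simp
qed

lemma separated_centers_far:
  assumes "e \<in> F" "r > 0" and "\<And>x y. dist x a < r \<Longrightarrow> dist y b < r \<Longrightarrow> m (iv x) y \<notin> F"
  shows "r \<le> dist b a"
proof (rule ccontr)
  assume "\<not> r \<le> dist b a"
  with \<open>r > 0\<close> have "b \<in> ball a r \<inter> ball b r"
    by (simp add: dist_commute)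
  with separated_balls_disjoint[OF assms(1,3)] show False
    by blast
qed

lemma separation_radius:
  assumes "finite I" "closed F" and z: "\<And>i j. i \<in> I \<Longrightarrow> j \<in> I \<Longrightarrow> i \<noteq> j \<Longrightarrow> m (iv (z i)) (z j) \<notin> F"
  obtains r where "r > 0" "\<And>i j x y. i \<in> I \<Longrightarrow> j \<in> I \<Longrightarrow> i \<noteq> j \<Longrightarrow>
      dist x (z i) < r \<Longrightarrow> dist y (z j) < r \<Longrightarrow> m (iv x) y \<notin> F"
proof -
  define Q where "Q r p \<longleftrightarrow> (\<forall>x y. dist x (z (fst p)) < r \<longrightarrow> dist y (z (snd p)) < r \<longrightarrow> m (iv x) y \<notin> F)"
    for r and p :: "_ \<times> _"
  define pairs where "pairs = {p \<in> I \<times> I. fst p \<noteq> snd p}"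
  have "eventually (\<lambda>r. Q r p) (at_right 0)" if "p \<in> pairs" for p
  proof -
    let ?g = "\<lambda>q. m (iv (fst q)) (snd q)"
    have "continuous_on UNIV ?g"
      by (intro continuous_on_m continuous_on_iv continuous_on_fst continuous_on_snd continuous_on_id)
    then have "open (?g -` (- F))"
      using \<open>closed F\<close> by (simp add: continuous_on_open_vimage open_Compl)
    moreover have "(z (fst p), z (snd p)) \<in> ?g -` (- F)"
      using z that by (auto simp: pairs_def)
    ultimately obtain d where "d > 0" and d: "ball (z (fst p), z (snd p)) d \<subseteq> ?g -` (- F)"
      by (rule openE)
    have "Q r p" if "r < d / 2" for r
      unfolding Q_def
    proof (intro allI impI)
      fix x y assume "dist x (z (fst p)) < r" "dist y (z (snd p)) < r"
      then have "dist (x, y) (z (fst p), z (snd p)) < d"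
        using sqrt_sum_squares_le_sum[of "dist x (z (fst p))" "dist y (z (snd p))"] that
        by (simp add: dist_Pair_Pair)
      with d show "m (iv x) y \<notin> F"
        by (auto simp: dist_commute)
    qed
    then show ?thesis
      unfolding eventually_at_right_field using \<open>d > 0\<close> by (intro exI[of _ "d / 2"]) auto
  qed
  moreover have "finite pairs"
    using assms(1) by (simp add: pairs_def)
  ultimately have "eventually (\<lambda>r. r > 0 \<and> (\<forall>p\<in>pairs. Q r p)) (at_right 0)"
    by (intro eventually_conj eventually_at_right_less eventually_ball_finite) auto
  then obtain r where "r > 0" "\<forall>p\<in>pairs. Q r p"
    using eventually_happens'[OF trivial_limit_at_right_real] by blast
  then show ?thesis
    using that unfolding pairs_def Q_def by force
qed

end

section \<open>Heavy measures form a nowhere dense set\<close>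

definition bump :: "real \<Rightarrow> 'a::metric_space \<Rightarrow> 'a \<Rightarrow> real"
  where "bump r c x = max 0 (1 - dist x c / r)"

lemma continuous_on_bump: "r > 0 \<Longrightarrow> continuous_on UNIV (bump r c)"
  unfolding bump_def by (intro continuous_intros) auto

lemma bounded_range_bump: "r > 0 \<Longrightarrow> bounded (range (bump r c))"
  unfolding bump_def bounded_real by (intro exI[of _ 1]) auto

lemma bump_le_indicator_ball: "r > 0 \<Longrightarrow> bump r c x \<le> indicator (ball c r) x"
  unfolding bump_def by (auto simp: indicator_def dist_commute not_less field_simps)

lemma bump_center [simp]: "r > 0 \<Longrightarrow> bump r c c = 1"
  unfolding bump_def by simp

lemma bump_eq_0: "r > 0 \<Longrightarrow> r \<le> dist x c \<Longrightarrow> bump r c x = 0"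
  unfolding bump_def by (auto simp: field_simps)

lemma integral_bump_point_mixture:
  assumes "finite I" "\<And>j. j \<in> I \<Longrightarrow> 0 \<le> v j" "(\<Sum>j\<in>I. v j) = 1" "r > 0" "i \<in> I"
    and far: "\<And>j. j \<in> I \<Longrightarrow> j \<noteq> i \<Longrightarrow> r \<le> dist (z j) (z i)"
  shows "integral\<^sup>L (point_mixture I v z) (bump r (z i)) = v i"
proof -
  have "integral\<^sup>L (point_mixture I v z) (bump r (z i)) = (\<Sum>j\<in>I. v j * bump r (z i) (z j))"
    using assms(1-3) borel_measurable_continuous_onI[OF continuous_on_bump[OF \<open>r > 0\<close>]]
    by (rule integral_point_mixture)
  also have "\<dots> = v i * bump r (z i) (z i) + (\<Sum>j\<in>I - {i}. v j * bump r (z i) (z j))"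
    using assms(1,5) by (simp add: sum.remove)
  also have "(\<Sum>j\<in>I - {i}. v j * bump r (z i) (z j)) = 0"
    using far bump_eq_0[OF \<open>r > 0\<close>] by (intro sum.neutral) auto
  finally show ?thesis
    using \<open>r > 0\<close> by simp
qed

lemma abs_sum_weighted_diff_le:
  fixes a b v :: "'i \<Rightarrow> real"
  assumes "\<And>i. i \<in> I \<Longrightarrow> v i \<ge> 0" "(\<Sum>i\<in>I. v i) = 1" "\<And>i. i \<in> I \<Longrightarrow> \<bar>a i - b i\<bar> \<le> \<eta>"
  shows "\<bar>(\<Sum>i\<in>I. v i * a i) - (\<Sum>i\<in>I. v i * b i)\<bar> \<le> \<eta>"
proof -
  have "\<bar>(\<Sum>i\<in>I. v i * a i) - (\<Sum>i\<in>I. v i * b i)\<bar> \<le> (\<Sum>i\<in>I. \<bar>v i * (a i - b i)\<bar>)"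
    unfolding sum_subtractf[symmetric] right_diff_distrib[symmetric] by (rule sum_abs)
  also have "\<dots> \<le> (\<Sum>i\<in>I. v i * \<eta>)"
    using assms(1,3) by (intro sum_mono) (simp add: abs_mult mult_left_mono)
  also have "\<dots> = \<eta>"
    using assms(2) by (simp add: sum_distrib_right[symmetric])
  finally show ?thesis .
qed

lemma sum_split_uniform:
  fixes w g :: "'c \<Rightarrow> real" and M :: nat
  assumes "M > 0"
  shows "(\<Sum>i\<in>C \<times> {..<M}. w (fst i) / M * g (fst i)) = (\<Sum>c\<in>C. w c * g c)"
proof -
  have "(\<Sum>i\<in>C \<times> {..<M}. w (fst i) / M * g (fst i)) = (\<Sum>c\<in>C. \<Sum>t<M. w c / M * g c)"
    unfolding sum.cartesian_product by (simp add: case_prod_beta')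
  also have "\<dots> = (\<Sum>c\<in>C. w c * g c)"
    using assms by simp
  finally show ?thesis .
qed

lemma (in prob_space) measure_pair_Times:
  assumes "A \<in> events" "B \<in> events"
  shows "measure (M \<Otimes>\<^sub>M M) (A \<times> B) = prob A * prob B"
proof -
  have "emeasure (M \<Otimes>\<^sub>M M) (A \<times> B) = ennreal (prob A * prob B)"
    using emeasure_pair_measure_Times[OF assms] by (simp add: emeasure_eq_measure ennreal_mult)
  then show ?thesis
    by (simp add: measure_def)
qed

lemma (in prob_space) disjoint_events_near_weights:
  fixes v :: "'i \<Rightarrow> real" and \<delta> :: real
  assumes I: "finite I" and W: "\<And>i. i \<in> I \<Longrightarrow> W i \<in> events" "disjoint_family_on W I"
    and v: "(\<Sum>i\<in>I. v i) = 1" "\<And>i. i \<in> I \<Longrightarrow> v i - \<delta> < prob (W i)"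
  shows "\<And>i. i \<in> I \<Longrightarrow> prob (W i) \<le> v i + card I * \<delta>"
    and "prob (space M - (\<Union>i\<in>I. W i)) < card I * \<delta>"
proof -
  have I_ne: "I \<noteq> {}"
    using v(1) by auto
  have sum_W: "(\<Sum>i\<in>I. prob (W i)) = prob (\<Union>i\<in>I. W i)"
    using finite_measure_finite_Union[OF I _ W(2)] W(1) by (simp add: image_subset_iff)
  have "1 - card I * \<delta> = (\<Sum>i\<in>I. v i - \<delta>)"
    using v(1) by (simp add: sum_subtractf)
  also have "\<dots> < (\<Sum>i\<in>I. prob (W i))"
    using I I_ne v(2) by (intro sum_strict_mono) auto
  finally have lower: "1 - card I * \<delta> < prob (\<Union>i\<in>I. W i)"
    unfolding sum_W .
  have "prob (space M - (\<Union>i\<in>I. W i)) = 1 - prob (\<Union>i\<in>I. W i)"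
    using I W(1) by (intro prob_compl) auto
  with lower show "prob (space M - (\<Union>i\<in>I. W i)) < card I * \<delta>"
    by simp
  then have "0 < real (card I) * \<delta>"
    using measure_nonneg[of M "space M - (\<Union>i\<in>I. W i)"] by linarith
  then have "\<delta> > 0"
    by (simp add: zero_less_mult_iff)
  fix i assume i: "i \<in> I"
  have "prob (W i) + (\<Sum>j\<in>I - {i}. v j - \<delta>) \<le> prob (W i) + (\<Sum>j\<in>I - {i}. prob (W j))"
    using v(2) by (intro add_left_mono sum_mono less_imp_le) auto
  also have "\<dots> = prob (\<Union>i\<in>I. W i)"
    using I i by (simp add: sum_W[symmetric] sum.remove)
  also have "\<dots> \<le> 1"
    by simp
  finally have "prob (W i) \<le> 1 - (\<Sum>j\<in>I - {i}. v j) + card (I - {i}) * \<delta>"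
    by (simp add: sum_subtractf)
  also have "1 - (\<Sum>j\<in>I - {i}. v j) = v i"
    using I i v(1) by (simp add: sum_diff1)
  also have "card (I - {i}) * \<delta> \<le> card I * \<delta>"
    using I \<open>\<delta> > 0\<close> by (intro mult_right_mono) (auto simp: card_mono)
  finally show "prob (W i) \<le> v i + card I * \<delta>"
    by simp
qed

lemma related_pairs_subset:
  fixes Q :: "'a \<Rightarrow> 'a \<Rightarrow> bool"
  assumes "K \<subseteq> X"
    and Q: "\<And>i j x y. i \<in> I \<Longrightarrow> j \<in> I \<Longrightarrow> i \<noteq> j \<Longrightarrow> x \<in> W i \<Longrightarrow> y \<in> W j \<Longrightarrow> \<not> Q x y"
  shows "{p \<in> K \<times> K. Q (fst p) (snd p)} \<subseteq> (\<Union>i\<in>I. (K \<inter> W i) \<times> (K \<inter> W i))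
    \<union> (X - (\<Union>i\<in>I. W i)) \<times> X \<union> X \<times> (X - (\<Union>i\<in>I. W i))"
proof
  fix p assume "p \<in> {p \<in> K \<times> K. Q (fst p) (snd p)}"
  then obtain x y where xy: "p = (x, y)" "x \<in> K" "y \<in> K" "Q x y"
    by auto
  show "p \<in> (\<Union>i\<in>I. (K \<inter> W i) \<times> (K \<inter> W i)) \<union> (X - (\<Union>i\<in>I. W i)) \<times> X \<union> X \<times> (X - (\<Union>i\<in>I. W i))"
  proof (cases "x \<in> (\<Union>i\<in>I. W i) \<and> y \<in> (\<Union>i\<in>I. W i)")
    case True
    then obtain i j where ij: "i \<in> I" "j \<in> I" "x \<in> W i" "y \<in> W j"
      by blast
    with Q xy(4) have "i = j"
      by blast
    with ij xy(1-3) show ?thesis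
      by blast
  next
    case False
    with xy(1-3) assms(1) show ?thesis
      by blast
  qed
qed

lemma (in prob_space) measure_pair_relation_le:
  fixes Q :: "'a \<Rightarrow> 'a \<Rightarrow> bool"
  assumes I: "finite I" and W: "\<And>i. i \<in> I \<Longrightarrow> W i \<in> events" "disjoint_family_on W I"
    and K: "K \<in> events"
    and Q: "\<And>i j x y. i \<in> I \<Longrightarrow> j \<in> I \<Longrightarrow> i \<noteq> j \<Longrightarrow> x \<in> W i \<Longrightarrow> y \<in> W j \<Longrightarrow> \<not> Q x y"
  shows "measure (M \<Otimes>\<^sub>M M) {p \<in> K \<times> K. Q (fst p) (snd p)}
    \<le> (\<Sum>i\<in>I. prob (K \<inter> W i) ^ 2) + 2 * prob (space M - (\<Union>i\<in>I. W i))"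
proof -
  interpret MM: prob_space "M \<Otimes>\<^sub>M M"
    by (rule prob_space_pair) unfold_locales
  define R where "R = space M - (\<Union>i\<in>I. W i)"
  define D where "D = (\<Union>i\<in>I. (K \<inter> W i) \<times> (K \<inter> W i))"
  have R: "R \<in> events"
    unfolding R_def using I W(1) by auto
  have KW: "K \<inter> W i \<in> events" if "i \<in> I" for i
    using K W(1)[OF that] by auto
  have D: "D \<in> sets (M \<Otimes>\<^sub>M M)"
    unfolding D_def using I KW by (intro sets.finite_UN pair_measureI) auto
  have RM: "R \<times> space M \<in> sets (M \<Otimes>\<^sub>M M)" "space M \<times> R \<in> sets (M \<Otimes>\<^sub>M M)"
    using R by (auto intro: pair_measureI)
  have "{p \<in> K \<times> K. Q (fst p) (snd p)} \<subseteq> D \<union> R \<times> space M \<union> space M \<times> R"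
    unfolding D_def R_def using K[THEN sets.sets_into_space] Q by (rule related_pairs_subset)
  then have "measure (M \<Otimes>\<^sub>M M) {p \<in> K \<times> K. Q (fst p) (snd p)}
      \<le> measure (M \<Otimes>\<^sub>M M) (D \<union> R \<times> space M \<union> space M \<times> R)"
    using D RM by (intro MM.finite_measure_mono) auto
  also have "\<dots> \<le> measure (M \<Otimes>\<^sub>M M) D + measure (M \<Otimes>\<^sub>M M) (R \<times> space M)
      + measure (M \<Otimes>\<^sub>M M) (space M \<times> R)"
    using measure_Un_le[OF sets.Un[OF D RM(1)] RM(2)]
      measure_Un_le[OF D RM(1)] by linarith
  also have "measure (M \<Otimes>\<^sub>M M) D \<le> (\<Sum>i\<in>I. measure (M \<Otimes>\<^sub>M M) ((K \<inter> W i) \<times> (K \<inter> W i)))"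
    unfolding D_def using I KW by (intro MM.finite_measure_subadditive_finite) (auto intro: pair_measureI)
  also have "\<dots> = (\<Sum>i\<in>I. prob (K \<inter> W i) ^ 2)"
    using KW by (simp add: measure_pair_Times power2_eq_square)
  also have "measure (M \<Otimes>\<^sub>M M) (R \<times> space M) = prob R"
    using R by (simp add: measure_pair_Times prob_space)
  also have "measure (M \<Otimes>\<^sub>M M) (space M \<times> R) = prob R"
    using R by (simp add: measure_pair_Times prob_space)
  finally show ?thesis
    unfolding R_def by simp
qed

lemma integral_bump_le_measure_ball:
  assumes \<nu>: "\<nu> \<in> prob_measures" and r: "r > 0"
  shows "integral\<^sup>L \<nu> (bump r c) \<le> measure \<nu> (ball c r)"
proof -
  interpret prob_space \<nu>
    using prob_measuresD(3)[OF \<nu>] .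
  have "ball c r \<in> events"
    using prob_measuresD(1)[OF \<nu>] by simp
  have "integral\<^sup>L \<nu> (bump r c) \<le> expectation (indicator (ball c r))"
  proof (rule integral_mono)
    show "integrable \<nu> (bump r c)"
      using \<nu> continuous_on_bump[OF r] bounded_range_bump[OF r] by (rule integrable_bounded_continuous)
    show "integrable \<nu> (indicator (ball c r) :: 'a \<Rightarrow> real)"
      using \<open>ball c r \<in> events\<close> by (simp add: emeasure_eq_measure)
    show "bump r c x \<le> indicator (ball c r) x" for x
      using r by (rule bump_le_indicator_ball)
  qed
  with \<open>ball c r \<in> events\<close> show ?thesis
    by simp
qed

lemma (in prob_space) sum_prob_Int_squared_le:
  assumes I: "finite I" and W: "\<And>i. i \<in> I \<Longrightarrow> W i \<in> events" "disjoint_family_on W I"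
    and K: "K \<in> events" and "0 \<le> a" and small: "\<And>i. i \<in> I \<Longrightarrow> prob (W i) \<le> a"
  shows "(\<Sum>i\<in>I. prob (K \<inter> W i) ^ 2) \<le> a * prob K"
proof -
  have "(\<Sum>i\<in>I. prob (K \<inter> W i) ^ 2) \<le> (\<Sum>i\<in>I. a * prob (K \<inter> W i))"
  proof (intro sum_mono)
    fix i assume "i \<in> I"
    then have "prob (K \<inter> W i) \<le> a"
      using small[of i] finite_measure_mono[of "K \<inter> W i" "W i"] W(1) by fastforce
    then show "prob (K \<inter> W i) ^ 2 \<le> a * prob (K \<inter> W i)"
      unfolding power2_eq_square by (rule mult_right_mono) simp
  qed
  also have "\<dots> = a * prob (\<Union>i\<in>I. K \<inter> W i)"
  proof -
    have "prob (\<Union>i\<in>I. K \<inter> W i) = (\<Sum>i\<in>I. prob (K \<inter> W i))"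
      using K W by (intro finite_measure_finite_Union[OF I]) (auto simp: disjoint_family_on_def)
    then show ?thesis
      by (simp add: sum_distrib_left)
  qed
  also have "\<dots> \<le> a * prob K"
    using K \<open>0 \<le> a\<close> by (intro mult_left_mono finite_measure_mono) auto
  finally show ?thesis .
qed

context polish_grp
begin

definition heavy_measures :: "'a set \<Rightarrow> real \<Rightarrow> 'a measure set"
  where "heavy_measures F \<kappa> = {\<nu> \<in> prob_measures. \<exists>K. compact K \<and> \<kappa> \<le> measure \<nu> K \<and>
     (measure \<nu> K)\<^sup>2 / 2 \<le> measure (\<nu> \<Otimes>\<^sub>M \<nu>) {p \<in> K \<times> K. m (iv (fst p)) (snd p) \<in> F}}"

lemma left_quotient_pairs_in_sets:
  assumes \<nu>: "\<nu> \<in> prob_measures" and "closed K" "closed F"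
  shows "{p \<in> K \<times> K. m (iv (fst p)) (snd p) \<in> F} \<in> sets (\<nu> \<Otimes>\<^sub>M \<nu>)"
proof -
  have "continuous_on UNIV (\<lambda>p. m (iv (fst p)) (snd p))"
    by (intro continuous_on_m continuous_on_iv continuous_on_fst continuous_on_snd continuous_on_id)
  then have "closed ((\<lambda>p. m (iv (fst p)) (snd p)) -` F)"
    using \<open>closed F\<close> by (simp add: continuous_on_closed_vimage)
  moreover have "{p \<in> K \<times> K. m (iv (fst p)) (snd p) \<in> F} = (K \<times> K) \<inter> (\<lambda>p. m (iv (fst p)) (snd p)) -` F"
    by auto
  ultimately have "closed {p \<in> K \<times> K. m (iv (fst p)) (snd p) \<in> F}"
    using \<open>closed K\<close> by (simp add: closed_Int closed_Times)
  moreover have "sets (\<nu> \<Otimes>\<^sub>M \<nu>) = sets (borel :: ('a \<times> 'a) measure)"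
    using sets_pair_measure_cong[OF prob_measuresD(1)[OF \<nu>] prob_measuresD(1)[OF \<nu>]]
    by (simp only: borel_prod)
  ultimately show ?thesis
    by simp
qed

lemma not_heavy_if_spread:
  fixes v :: "'i \<Rightarrow> real" and \<delta> :: real
  assumes \<nu>: "\<nu> \<in> prob_measures" and "e \<in> F" and \<kappa>: "0 < \<kappa>" "\<kappa> \<le> 1"
    and I: "finite I" and r: "r > 0"
    and sep: "\<And>i j x y. i \<in> I \<Longrightarrow> j \<in> I \<Longrightarrow> i \<noteq> j \<Longrightarrow>
      dist x (z i) < r \<Longrightarrow> dist y (z j) < r \<Longrightarrow> m (iv x) y \<notin> F"
    and v: "(\<Sum>i\<in>I. v i) = 1" "\<And>i. i \<in> I \<Longrightarrow> v i \<le> \<kappa> / 8"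
    and \<delta>: "card I * \<delta> \<le> \<kappa>\<^sup>2 / 16"
    and mass: "\<And>i. i \<in> I \<Longrightarrow> v i - \<delta> < integral\<^sup>L \<nu> (bump r (z i))"
  shows "\<nu> \<notin> heavy_measures F \<kappa>"
proof
  assume "\<nu> \<in> heavy_measures F \<kappa>"
  then obtain K where K: "compact K" "\<kappa> \<le> measure \<nu> K"
    and heavy: "(measure \<nu> K)\<^sup>2 / 2 \<le> measure (\<nu> \<Otimes>\<^sub>M \<nu>) {p \<in> K \<times> K. m (iv (fst p)) (snd p) \<in> F}"
    unfolding heavy_measures_def by blast
  interpret prob_space \<nu>
    using prob_measuresD(3)[OF \<nu>] .
  define W where "W i = ball (z i) r" for i
  define R where "R = space \<nu> - (\<Union>i\<in>I. W i)"
  have W: "W i \<in> events" for i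
    unfolding W_def using prob_measuresD(1)[OF \<nu>] by simp
  have K_events: "K \<in> events"
    using K(1) prob_measuresD(1)[OF \<nu>] by (simp add: borel_compact)
  have W_disj: "disjoint_family_on W I"
    unfolding disjoint_family_on_def W_def
  proof (intro ballI impI)
    fix i j assume "i \<in> I" "j \<in> I" "i \<noteq> j"
    with sep show "ball (z i) r \<inter> ball (z j) r = {}"
      by (intro separated_balls_disjoint[OF \<open>e \<in> F\<close>])
  qed
  have mass_W: "v i - \<delta> < prob (W i)" if "i \<in> I" for i
    using mass[OF that] integral_bump_le_measure_ball[OF \<nu> r, of "z i"] by (simp add: W_def)
  have small_W: "prob (W i) \<le> \<kappa> / 4" if "i \<in> I" for i
  proof -
    have "prob (W i) \<le> v i + card I * \<delta>"
      using I W W_disj v(1) mass_W that by (rule disjoint_events_near_weights(1))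
    moreover have "\<kappa>\<^sup>2 / 16 \<le> \<kappa> / 8"
      using \<kappa> by (simp add: power2_eq_square mult_le_cancel_left1)
    ultimately show ?thesis
      using v(2)[OF that] \<delta> by linarith
  qed
  have "prob R < card I * \<delta>"
    unfolding R_def using I W W_disj v(1) mass_W by (rule disjoint_events_near_weights(2))
  moreover have "\<kappa>\<^sup>2 \<le> (prob K)\<^sup>2"
    using K(2) \<kappa>(1) by (intro power_mono) auto
  ultimately have small_R: "2 * prob R < (prob K)\<^sup>2 / 8"
    using \<delta> by linarith
  have "measure (\<nu> \<Otimes>\<^sub>M \<nu>) {p \<in> K \<times> K. m (iv (fst p)) (snd p) \<in> F}
      \<le> (\<Sum>i\<in>I. prob (K \<inter> W i) ^ 2) + 2 * prob R"
    unfolding R_def using sep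
    by (intro measure_pair_relation_le[OF I W W_disj K_events]) (auto simp: W_def dist_commute)
  also have "(\<Sum>i\<in>I. prob (K \<inter> W i) ^ 2) \<le> \<kappa> / 4 * prob K"
  proof (rule sum_prob_Int_squared_le[OF I W W_disj K_events])
    show "0 \<le> \<kappa> / 4"
      using \<kappa> by simp
  qed (rule small_W)
  also have "\<kappa> / 4 * prob K \<le> (prob K)\<^sup>2 / 4"
    using K(2) by (simp add: power2_eq_square mult_right_mono)
  finally show False
    using heavy small_R zero_le_power2[of "prob K"] by linarith
qed

lemma spread_point_mixture_near:
  fixes \<mu>0 :: "'a measure" and fs :: "('a \<Rightarrow> real) list"
  assumes \<mu>0: "\<mu>0 \<in> prob_measures" and fs: "\<forall>f\<in>set fs. continuous_on UNIV f \<and> bounded (range f)"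
    and \<epsilon>: "\<epsilon> > 0" and \<kappa>: "\<kappa> > 0" and F: "closed_nowhere_dense F"
  obtains I :: "('a \<times> nat) set" and v r z where "finite I" "\<And>i. i \<in> I \<Longrightarrow> 0 \<le> v i"
    "\<And>i. i \<in> I \<Longrightarrow> v i \<le> \<kappa> / 8" "(\<Sum>i\<in>I. v i) = 1" "r > 0"
    "\<And>i j x y. i \<in> I \<Longrightarrow> j \<in> I \<Longrightarrow> i \<noteq> j \<Longrightarrow>
      dist x (z i) < r \<Longrightarrow> dist y (z j) < r \<Longrightarrow> m (iv x) y \<notin> F"
    "\<And>f. f \<in> set fs \<Longrightarrow> \<bar>(\<Sum>i\<in>I. v i * f (z i)) - integral\<^sup>L \<mu>0 f\<bar> < \<epsilon>"
proof -
  define \<eta> where "\<eta> = \<epsilon> / 3"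
  have \<eta>: "\<eta> > 0"
    using \<epsilon> by (simp add: \<eta>_def)
  obtain C w where C: "finite C" "\<And>c. c \<in> C \<Longrightarrow> w c \<ge> 0" "(\<Sum>c\<in>C. w c) = 1"
    and approx: "\<And>f. f \<in> set fs \<Longrightarrow> \<bar>(\<Sum>c\<in>C. w c * f c) - integral\<^sup>L \<mu>0 f\<bar> \<le> \<eta>"
    using finitely_supported_approx[OF \<mu>0 fs \<eta>] by blast
  \<comment> \<open>Splitting every atom into \<open>M\<close> equal parts makes all weights at most \<open>\<kappa> / 8\<close>.\<close>
  obtain M :: nat where M: "M > 0" "inverse (real M) < \<kappa> / 8"
    using ex_inverse_of_nat_less[of "\<kappa> / 8"] \<kappa> by auto
  define I where "I = C \<times> {..<M}"
  define v where "v i = w (fst i) / M" for i :: "'a \<times> nat"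
  have I: "finite I"
    using C(1) by (simp add: I_def)
  have v_nonneg: "0 \<le> v i" if "i \<in> I" for i
    using C(2) that by (auto simp: v_def I_def)
  have sum_v: "(\<Sum>i\<in>I. v i * g (fst i)) = (\<Sum>c\<in>C. w c * g c)" for g :: "'a \<Rightarrow> real"
    unfolding I_def v_def using M(1) by (rule sum_split_uniform)
  have v_sum: "(\<Sum>i\<in>I. v i) = 1"
    using sum_v[of "\<lambda>_. 1"] C(3) by simp
  have v_small: "v i \<le> \<kappa> / 8" if "i \<in> I" for i
  proof -
    have "w (fst i) \<le> 1"
      using that C member_le_sum[of "fst i" C w] by (auto simp: I_def)
    then have "v i \<le> inverse (real M)"
      unfolding v_def by (simp add: divide_right_mono inverse_eq_divide)
    with M(2) show ?thesis
      by linarith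
  qed
  define U where "U i = (\<Inter>f\<in>set fs. f -` ball (f (fst i)) \<eta>)" for i :: "'a \<times> nat"
  have "open (U i) \<and> U i \<noteq> {}" for i
  proof
    show "open (U i)"
      unfolding U_def using fs by (intro open_INT) (auto intro: open_vimage)
    have "fst i \<in> U i"
      unfolding U_def using \<eta> by auto
    then show "U i \<noteq> {}"
      by blast
  qed
  then obtain z where zU: "\<And>i. i \<in> I \<Longrightarrow> z i \<in> U i"
    and z: "\<And>i j. i \<in> I \<Longrightarrow> j \<in> I \<Longrightarrow> i \<noteq> j \<Longrightarrow> m (iv (z i)) (z j) \<notin> F"
    using general_position[OF I _ F] by blast
  obtain r where "r > 0" and r: "\<And>i j x y. i \<in> I \<Longrightarrow> j \<in> I \<Longrightarrow> i \<noteq> j \<Longrightarrow>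
      dist x (z i) < r \<Longrightarrow> dist y (z j) < r \<Longrightarrow> m (iv x) y \<notin> F"
    using separation_radius[of I F z, OF I _ z] F unfolding closed_nowhere_dense_def by blast
  show ?thesis
  proof (rule that[OF I v_nonneg v_small v_sum \<open>r > 0\<close> r])
    fix f assume f: "f \<in> set fs"
    have close: "\<bar>f (z i) - f (fst i)\<bar> \<le> \<eta>" if "i \<in> I" for i
      using zU[OF that] f by (auto simp: U_def dist_real_def)
    have "\<bar>(\<Sum>i\<in>I. v i * f (z i)) - (\<Sum>i\<in>I. v i * f (fst i))\<bar> \<le> \<eta>"
      using v_nonneg v_sum close by (rule abs_sum_weighted_diff_le)
    then have "\<bar>(\<Sum>i\<in>I. v i * f (z i)) - (\<Sum>c\<in>C. w c * f c)\<bar> \<le> \<eta>"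
      by (simp only: sum_v)
    with approx[OF f] show "\<bar>(\<Sum>i\<in>I. v i * f (z i)) - integral\<^sup>L \<mu>0 f\<bar> < \<epsilon>"
      using \<eta> unfolding \<eta>_def by linarith
  qed
qed

lemma nowhere_dense_heavy_measures:
  assumes F: "closed_nowhere_dense F" "e \<in> F" and \<kappa>: "0 < \<kappa>" "\<kappa> \<le> 1"
  shows "nowhere_dense_in weak_star_topology (heavy_measures F \<kappa>)"
proof (rule nowhere_dense_inI)
  show "heavy_measures F \<kappa> \<subseteq> topspace weak_star_topology"
    unfolding heavy_measures_def by auto
  fix U :: "'a measure set" assume U: "openin weak_star_topology U" "U \<noteq> {}"
  then obtain \<mu>0 where "\<mu>0 \<in> U"
    by blast
  then have \<mu>0: "\<mu>0 \<in> prob_measures"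
    using openin_subset[OF U(1)] by auto
  obtain fs :: "('a \<Rightarrow> real) list" and \<epsilon> where fs: "\<forall>f\<in>set fs. continuous_on UNIV f \<and> bounded (range f)"
    and "\<epsilon> > 0" and nbhd: "weak_nbhd \<mu>0 fs \<epsilon> \<subseteq> U"
    by (rule weak_nbhd_subset_openin[OF U(1) \<open>\<mu>0 \<in> U\<close>])
  obtain I :: "('a \<times> nat) set" and v r z where I: "finite I" and v: "\<And>i. i \<in> I \<Longrightarrow> 0 \<le> v i"
    "\<And>i. i \<in> I \<Longrightarrow> v i \<le> \<kappa> / 8" "(\<Sum>i\<in>I. v i) = 1" and "r > 0"
    and sep: "\<And>i j x y. i \<in> I \<Longrightarrow> j \<in> I \<Longrightarrow> i \<noteq> j \<Longrightarrow>
      dist x (z i) < r \<Longrightarrow> dist y (z j) < r \<Longrightarrow> m (iv x) y \<notin> F"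
    and near: "\<And>f. f \<in> set fs \<Longrightarrow> \<bar>(\<Sum>i\<in>I. v i * f (z i)) - integral\<^sup>L \<mu>0 f\<bar> < \<epsilon>"
    by (rule spread_point_mixture_near[OF \<mu>0 fs \<open>\<epsilon> > 0\<close> \<kappa>(1) F(1)]) (rule that)
  have I_ne: "I \<noteq> {}"
    using v(3) by auto
  define \<delta> where "\<delta> = \<kappa>\<^sup>2 / (16 * card I)"
  have \<delta>: "card I * \<delta> \<le> \<kappa>\<^sup>2 / 16"
    using I I_ne by (simp add: \<delta>_def card_gt_0_iff)
  define B where "B i = {\<nu> \<in> prob_measures. integral\<^sup>L \<nu> (bump r (z i)) \<in> {v i - \<delta><..}}" for i
  define V where "V = weak_nbhd \<mu>0 fs \<epsilon> \<inter> (\<Inter>i\<in>I. B i)"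
  define \<mu> where "\<mu> = point_mixture I v z"
  have integral_\<mu>: "integral\<^sup>L \<mu> f = (\<Sum>i\<in>I. v i * f (z i))" if "continuous_on UNIV f" for f
    unfolding \<mu>_def using I v(1,3) borel_measurable_continuous_onI[OF that]
    by (rule integral_point_mixture)
  show "\<exists>V. openin weak_star_topology V \<and> V \<noteq> {} \<and> V \<subseteq> U \<and> V \<inter> heavy_measures F \<kappa> = {}"
  proof (intro exI conjI)
    show "openin weak_star_topology V"
      unfolding V_def B_def using I I_ne fs \<open>r > 0\<close>
      by (intro openin_Int openin_weak_nbhd openin_INT2 openin_weak_star_integral
          continuous_on_bump bounded_range_bump open_greaterThan) auto
    show "V \<subseteq> U"
      unfolding V_def using nbhd by blast
    have "\<mu> \<in> weak_nbhd \<mu>0 fs \<epsilon>"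
      unfolding weak_nbhd_def \<mu>_def
      using point_mixture_in_prob_measures integral_\<mu> near fs by (auto simp: \<mu>_def)
    moreover have "\<mu> \<in> B i" if "i \<in> I" for i
    proof -
      have far: "r \<le> dist (z j) (z i)" if "j \<in> I" "j \<noteq> i" for j
        using sep[OF \<open>i \<in> I\<close> that(1)] that(2) by (intro separated_centers_far[OF F(2) \<open>r > 0\<close>]) auto
      have "integral\<^sup>L \<mu> (bump r (z i)) = v i"
        unfolding \<mu>_def using I v(1,3) \<open>r > 0\<close> \<open>i \<in> I\<close> far by (rule integral_bump_point_mixture)
      then show ?thesis
        unfolding B_def \<mu>_def using \<delta> I I_ne \<kappa>(1)
        by (simp add: point_mixture_in_prob_measures \<delta>_def card_gt_0_iff)
    qed
    ultimately show "V \<noteq> {}"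
      unfolding V_def by blast
    show "V \<inter> heavy_measures F \<kappa> = {}"
    proof (intro equals0I)
      fix \<nu> assume "\<nu> \<in> V \<inter> heavy_measures F \<kappa>"
      then have \<nu>: "\<nu> \<in> prob_measures" "\<nu> \<in> heavy_measures F \<kappa>"
        and mass: "\<And>i. i \<in> I \<Longrightarrow> v i - \<delta> < integral\<^sup>L \<nu> (bump r (z i))"
        unfolding V_def B_def weak_nbhd_def by auto
      have "\<nu> \<notin> heavy_measures F \<kappa>"
        by (rule not_heavy_if_spread[where z = z and v = v, OF \<nu>(1) F(2) \<kappa> I \<open>r > 0\<close> sep v(3) v(2) \<delta> mass])
      with \<nu>(2) show False
        by contradiction
    qed
  qed
qed

end

section \<open>Covering the complement of \<open>T(A)\<close>\<close>

lemma analytic_image2: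
  fixes h :: "'a::topological_space \<Rightarrow> 'b::topological_space \<Rightarrow> 'c::topological_space"
  assumes A: "analytic A" and B: "analytic B" and h: "continuous_on UNIV (\<lambda>p. h (fst p) (snd p))"
  shows "analytic {h a b | a b. a \<in> A \<and> b \<in> B}"
proof -
  obtain f :: "(nat \<Rightarrow> nat) \<Rightarrow> 'a" where f: "continuous_on UNIV f" "range f = A"
    using A unfolding analytic_def by blast
  obtain g :: "(nat \<Rightarrow> nat) \<Rightarrow> 'b" where g: "continuous_on UNIV g" "range g = B"
    using B unfolding analytic_def by blast
  \<comment> \<open>A sequence codes the pair of its even-indexed and odd-indexed subsequences.\<close>
  define evens :: "(nat \<Rightarrow> nat) \<Rightarrow> nat \<Rightarrow> nat" where "evens s = (\<lambda>n. s (2 * n))" for s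
  define odds :: "(nat \<Rightarrow> nat) \<Rightarrow> nat \<Rightarrow> nat" where "odds s = (\<lambda>n. s (2 * n + 1))" for s
  have "continuous_on UNIV evens" "continuous_on UNIV odds"
    unfolding evens_def odds_def
    by (intro continuous_on_coordinatewise_then_product continuous_on_product_coordinates)+
  then have "continuous_on UNIV (\<lambda>s. (f (evens s), g (odds s)))"
    by (intro continuous_on_Pair continuous_on_compose2[OF f(1)] continuous_on_compose2[OF g(1)]) auto
  then have "continuous_on UNIV (\<lambda>s. h (f (evens s)) (g (odds s)))"
    using continuous_on_compose2[OF h] by fastforce
  moreover have "range (\<lambda>s. h (f (evens s)) (g (odds s))) = {h a b | a b. a \<in> A \<and> b \<in> B}"
  proof (intro set_eqI iffI)
    fix x assume "x \<in> range (\<lambda>s. h (f (evens s)) (g (odds s)))"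
    then obtain s where "x = h (f (evens s)) (g (odds s))"
      by blast
    moreover have "f (evens s) \<in> A" "g (odds s) \<in> B"
      using f(2) g(2) by auto
    ultimately show "x \<in> {h a b | a b. a \<in> A \<and> b \<in> B}"
      by blast
  next
    fix x assume "x \<in> {h a b | a b. a \<in> A \<and> b \<in> B}"
    then obtain a b where x: "x = h a b" and "a \<in> range f" "b \<in> range g"
      using f(2) g(2) by blast
    then obtain s t where "a = f s" "b = g t"
      by blast
    define u where "u n = (if even n then s (n div 2) else t (n div 2))" for n
    have "evens u = s" "odds u = t"
      unfolding evens_def odds_def u_def by auto
    with x \<open>a = f s\<close> \<open>b = g t\<close> show "x \<in> range (\<lambda>s. h (f (evens s)) (g (odds s)))"
      by (intro range_eqI[where x = u]) simp
  qed
  ultimately show ?thesis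
    unfolding analytic_def by (intro exI[of _ "\<lambda>s. h (f (evens s)) (g (odds s))"] conjI)
qed

lemma closed_nowhere_dense_closure:
  "nowhere_dense_in euclidean S \<Longrightarrow> closed_nowhere_dense (closure S)"
  by (simp add: nowhere_dense_in_def closed_nowhere_dense_def)

lemma meager_in_incseq_cover:
  assumes "meager_in euclidean N" "x \<in> N"
  obtains F :: "nat \<Rightarrow> 'a::topological_space set" where "\<And>n. closed_nowhere_dense (F n)"
    "\<And>n. x \<in> F n" "incseq F" "N \<subseteq> (\<Union>n. F n)"
proof -
  obtain G :: "nat \<Rightarrow> 'a set" where G: "\<And>n. nowhere_dense_in euclidean (G n)" and N: "N \<subseteq> (\<Union>n. G n)"
    using assms(1) unfolding meager_in_def by blast
  obtain n0 where "x \<in> G n0"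
    using assms(2) N by blast
  define F where "F n = closure (G n0) \<union> (\<Union>i\<le>n. closure (G i))" for n
  show ?thesis
  proof (rule that)
    show "closed_nowhere_dense (F n)" for n
      unfolding F_def using G
      by (intro closed_nowhere_dense_Un closed_nowhere_dense_UN closed_nowhere_dense_closure) simp_all
    show "x \<in> F n" for n
      unfolding F_def using \<open>x \<in> G n0\<close> closure_subset by blast
    show "incseq F"
      unfolding F_def by (intro incseq_SucI Un_mono order_refl UN_mono) auto
    show "N \<subseteq> (\<Union>n. F n)"
    proof
      fix y assume "y \<in> N"
      with N obtain n where "y \<in> G n"
        by blast
      then have "y \<in> F n"
        unfolding F_def using closure_subset by blast
      then show "y \<in> (\<Union>n. F n)"
        by blast
    qed
  qed
qed

lemma (in finite_measure) measure_incseq_exceeds: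
  assumes "range S \<subseteq> sets M" "incseq S" "c < measure M (\<Union>n. S n)"
  obtains n where "c < measure M (S n)"
proof -
  have "eventually (\<lambda>n. c < measure M (S n)) sequentially"
    using finite_Lim_measure_incseq[OF assms(1,2)] assms(3) by (rule order_tendstoD(1))
  then show ?thesis
    using that by (auto simp: eventually_sequentially)
qed

lemma compact_subset_of_positive_measure:
  fixes \<mu> :: "'a::polish_space measure"
  assumes \<mu>: "\<mu> \<in> prob_measures" and X: "measure (completion \<mu>) X \<noteq> 0"
  obtains K where "compact K" "K \<subseteq> X" "measure \<mu> K > 0"
proof -
  interpret prob_space \<mu>
    using prob_measuresD(3)[OF \<mu>] .
  have X_sets: "X \<in> sets (completion \<mu>)"
    using X measure_notin_sets by blast
  define B where "B = main_part \<mu> X"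
  have B_sets: "B \<in> sets borel"
    using main_part_sets[OF X_sets] prob_measuresD(1)[OF \<mu>] by (simp add: B_def)
  have "B \<subseteq> X"
    using Un_upper1[of B "null_part \<mu> X"] main_part_null_part_Un[OF X_sets] by (simp add: B_def)
  have "measure \<mu> B = measure (completion \<mu>) X"
    using X_sets by (simp add: B_def measure_def)
  then have "emeasure \<mu> B > 0"
    using X by (simp add: emeasure_eq_measure less_le)
  also have "emeasure \<mu> B = (SUP K \<in> {K. K \<subseteq> B \<and> compact K}. emeasure \<mu> K)"
    using inner_regular[of \<mu> B] prob_measuresD(1)[OF \<mu>] B_sets by simp
  finally obtain K where "K \<subseteq> B" "compact K" "emeasure \<mu> K > 0"
    by (auto simp: less_SUP_iff)
  with \<open>B \<subseteq> X\<close> that show ?thesis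
    by (simp add: emeasure_eq_measure)
qed

context polish_grp
begin

lemma left_quotient_of_translate_in_conj_saturation:
  assumes "x \<in> (\<lambda>a. m (m g1 a) g2) ` A" "y \<in> (\<lambda>a. m (m g1 a) g2) ` A"
  shows "m (iv x) y \<in> conj_saturation m iv {m (iv a) b | a b. a \<in> A \<and> b \<in> A}"
proof -
  obtain a b where ab: "a \<in> A" "b \<in> A" "x = m (m g1 a) g2" "y = m (m g1 b) g2"
    using assms by blast
  have "m (iv x) y = m (m (iv g2) (m (iv a) b)) (iv (iv g2))"
    unfolding ab by (simp add: inverse_distrib_swap assoc)
  with ab(1,2) show ?thesis
    unfolding conj_saturation_def by blast
qed

lemma heavy_if_not_in_T_set:
  assumes \<mu>: "\<mu> \<in> prob_measures" "\<mu> \<notin> T_set m A"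
    and F: "\<And>n. closed (F n)" "incseq F"
    and cover: "conj_saturation m iv {m (iv a) b | a b. a \<in> A \<and> b \<in> A} \<subseteq> (\<Union>n. F n)"
  obtains n k where "\<mu> \<in> heavy_measures (F n) (1 / Suc k)"
proof -
  interpret prob_space \<mu>
    using prob_measuresD(3)[OF \<mu>(1)] .
  interpret MM: prob_space "\<mu> \<Otimes>\<^sub>M \<mu>"
    by (rule prob_space_pair) unfold_locales
  obtain g1 g2 where "measure (completion \<mu>) ((\<lambda>a. m (m g1 a) g2) ` A) \<noteq> 0"
    using \<mu> unfolding T_set_def by blast
  then obtain K where K: "compact K" "K \<subseteq> (\<lambda>a. m (m g1 a) g2) ` A" "prob K > 0"
    using compact_subset_of_positive_measure[OF \<mu>(1)] by blast
  define S where "S n = {p \<in> K \<times> K. m (iv (fst p)) (snd p) \<in> F n}" for n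
  have S_sets: "range S \<subseteq> sets (\<mu> \<Otimes>\<^sub>M \<mu>)"
    unfolding S_def using left_quotient_pairs_in_sets[OF \<mu>(1) compact_imp_closed[OF K(1)] F(1)] by blast
  have "incseq S"
    using F(2) unfolding S_def incseq_def by blast
  have "(\<Union>n. S n) = K \<times> K"
  proof
    show "K \<times> K \<subseteq> (\<Union>n. S n)"
    proof clarify
      fix x y assume "x \<in> K" "y \<in> K"
      then have "m (iv x) y \<in> (\<Union>n. F n)"
        using cover K(2) left_quotient_of_translate_in_conj_saturation[of x g1 g2 A y] by blast
      with \<open>x \<in> K\<close> \<open>y \<in> K\<close> show "(x, y) \<in> (\<Union>n. S n)"
        unfolding S_def by auto
    qed
  qed (auto simp: S_def)
  then have "(prob K)\<^sup>2 / 2 < measure (\<mu> \<Otimes>\<^sub>M \<mu>) (\<Union>n. S n)"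
    using K(1,3) prob_measuresD(1)[OF \<mu>(1)]
    by (simp add: measure_pair_Times borel_compact power2_eq_square)
  with S_sets \<open>incseq S\<close> obtain n where n: "(prob K)\<^sup>2 / 2 < measure (\<mu> \<Otimes>\<^sub>M \<mu>) (S n)"
    by (rule MM.measure_incseq_exceeds)
  obtain k where "1 / real (Suc k) < prob K"
    using K(3) by (metis reals_Archimedean inverse_eq_divide of_nat_Suc)
  with \<mu>(1) K(1) n have "\<mu> \<in> heavy_measures (F n) (1 / Suc k)"
    unfolding heavy_measures_def S_def by (auto intro!: exI[of _ K])
  then show ?thesis
    by (rule that)
qed

lemma comeager_T_set:
  assumes F: "\<And>n. closed_nowhere_dense (F n)" "\<And>n. e \<in> F n" "incseq F"
    and cover: "conj_saturation m iv {m (iv a) b | a b. a \<in> A \<and> b \<in> A} \<subseteq> (\<Union>n. F n)"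
  shows "comeager_in weak_star_topology (T_set m A)"
proof -
  define H where "H j = heavy_measures (F (fst (prod_decode j))) (1 / Suc (snd (prod_decode j)))" for j
  have "nowhere_dense_in weak_star_topology (H j)" for j
    unfolding H_def using F by (intro nowhere_dense_heavy_measures) auto
  moreover have "prob_measures - T_set m A \<subseteq> (\<Union>j. H j)"
  proof
    fix \<mu> assume "\<mu> \<in> prob_measures - T_set m A"
    then obtain n k where "\<mu> \<in> heavy_measures (F n) (1 / Suc k)"
      using heavy_if_not_in_T_set[of \<mu> A F] F cover unfolding closed_nowhere_dense_def by blast
    then have "\<mu> \<in> H (prod_encode (n, k))"
      unfolding H_def by simp
    then show "\<mu> \<in> (\<Union>j. H j)"
      by blast
  qed
  ultimately show ?thesis
    unfolding comeager_in_def meager_in_def T_set_def by auto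
qed

end

theorem proposition3:
  fixes m :: "'a::polish_space \<Rightarrow> 'a \<Rightarrow> 'a" and e :: 'a and iv :: "'a \<Rightarrow> 'a"
    and A :: "'a set"
  assumes "polish_group m e iv"
    and "uncountable (UNIV :: 'a set)"
    and "condition_C m iv"
    and "analytic A"
    and "meager_in euclidean {m (iv a) b | a b. a \<in> A \<and> b \<in> A}"
  shows "comeager_in weak_star_topology (T_set m A)"
proof -
  interpret polish_grp m e iv
    by (rule polish_grp.intro) (fact assms(1))
  let ?D = "{m (iv a) b | a b. a \<in> A \<and> b \<in> A}"
  have "analytic ?D"
    by (rule analytic_image2[OF assms(4) assms(4)])
      (intro continuous_on_m continuous_on_iv continuous_on_fst continuous_on_snd continuous_on_id)
  then have "meager_in euclidean (conj_saturation m iv ?D)"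
    using assms(3,5) unfolding condition_C_def by blast
  moreover obtain a where "a \<in> A"
    using assms(4) unfolding analytic_def by blast
  then have "e \<in> conj_saturation m iv ?D"
    unfolding conj_saturation_def by force
  ultimately obtain F where "\<And>n. closed_nowhere_dense (F n)" "\<And>n. e \<in> F n" "incseq F"
    "conj_saturation m iv ?D \<subseteq> (\<Union>n. F n)"
    by (rule meager_in_incseq_cover) (rule that)
  then show ?thesis
    by (rule comeager_T_set)
qed

end
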